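(* Let $P$ be a finite type $\mathbb{N}$-graded upho poset with minimum element $\hat 0$ and rank function $\rho$, and suppose $P$ is a meet semilattice. Then for every integer $m\ge 1$, \[ \sum_{\substack{(p_1,\ldots,p_m)\in P^m,\\ p_1\wedge\cdots\wedge p_m=\hat 0}} x^{\rho(p_1)+\cdots+\rho(p_m)} = F_P(x)^m\cdot F_P(x^m)^{-1} \] as formal power series.
   Context: A poset $P$ is $\mathbb{N}$-graded if $P = P_0\sqcup P_1\sqcup P_2\sqcup\cdots$ (disjoint union) such that every maximal chain has the form $p_0\lessdot p_1\lessdot p_2\lessdot\cdots$ with $p_i\in P_i$ for all $i$. Its rank function $\rho\colon P\to\mathbb{N}$ is $\rho(p)=i$ for $p\in P_i$. $P$ has finite type if $\#P_i<\infty$ for all $i$. The rank generating function is $F_P(x)=\sum_{p\in P}x^{\rho(p)}$. $P$ is upper homogeneous (upho) if for every $p\in P$ the principal order filter $V_p=\{q\in P: q\ge p\}$ is isomorphic as a poset to $P$. A meet semilattice is a poset in which every pair of elements has a greatest lower bound $\wedge$. *)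

theory Defs
  imports "HOL-Library.FuncSet" "HOL-Computational_Algebra.Formal_Power_Series"
begin

definition chain_in :: "'a::order set \<Rightarrow> bool" where
  "chain_in C \<longleftrightarrow> (\<forall>x\<in>C. \<forall>y\<in>C. x \<le> y \<or> y \<le> x)"

definition maximal_chain :: "'a::order set \<Rightarrow> bool" where
  "maximal_chain C \<longleftrightarrow> chain_in C \<and> (\<forall>D. chain_in D \<and> C \<subseteq> D \<longrightarrow> D = C)"

definition covers :: "'a::order \<Rightarrow> 'a \<Rightarrow> bool" where
  "covers p q \<longleftrightarrow> p < q \<and> \<not> (\<exists>r. p < r \<and> r < q)"

text \<open>N-graded with rank function rho (P_i = rho^{-1}(i)): every maximal chain C has the form
  p_0 covered-by p_1 covered-by ... with p_i in P_i, i.e. rho maps C bijectively onto an initial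
  segment of N (finite or all of N) and consecutive elements are covering pairs.\<close>
definition graded_by :: "('a::order \<Rightarrow> nat) \<Rightarrow> bool" where
  "graded_by \<rho> \<longleftrightarrow> (\<forall>C. maximal_chain C \<longrightarrow>
      inj_on \<rho> C \<and> (\<forall>x\<in>C. \<forall>i\<le>\<rho> x. i \<in> \<rho> ` C) \<and>
      (\<forall>x\<in>C. \<forall>y\<in>C. \<rho> y = Suc (\<rho> x) \<longrightarrow> covers x y))"

definition finite_type :: "('a::order \<Rightarrow> nat) \<Rightarrow> bool" where
  "finite_type \<rho> \<longleftrightarrow> (\<forall>i. finite {p. \<rho> p = i})"

definition order_iso_on :: "('a::order \<Rightarrow> 'b::order) \<Rightarrow> 'a set \<Rightarrow> 'b set \<Rightarrow> bool" where
  "order_iso_on f A B \<longleftrightarrow> bij_betw f A B \<and> (\<forall>x\<in>A. \<forall>y\<in>A. x \<le> y \<longleftrightarrow> f x \<le> f y)"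

definition upho :: "'a::order itself \<Rightarrow> bool" where
  "upho _ \<longleftrightarrow> (\<forall>p::'a. \<exists>f. order_iso_on f {q. q \<ge> p} (UNIV :: 'a set))"

definition is_meet :: "'a::order set \<Rightarrow> 'a \<Rightarrow> bool" where
  "is_meet S z \<longleftrightarrow> (\<forall>s\<in>S. z \<le> s) \<and> (\<forall>d. (\<forall>s\<in>S. d \<le> s) \<longrightarrow> d \<le> z)"

definition meet_semilattice :: "'a::order itself \<Rightarrow> bool" where
  "meet_semilattice _ \<longleftrightarrow> (\<forall>a b::'a. \<exists>z. is_meet {a, b} z)"

definition rank_gf :: "('a::order \<Rightarrow> nat) \<Rightarrow> rat fps" where
  "rank_gf \<rho> = Abs_fps (\<lambda>n. of_nat (card {p. \<rho> p = n}))"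

definition meet_tuple_gf :: "('a::order \<Rightarrow> nat) \<Rightarrow> 'a \<Rightarrow> nat \<Rightarrow> rat fps" where
  "meet_tuple_gf \<rho> z m = Abs_fps (\<lambda>n. of_nat (card
     {p \<in> {..<m} \<rightarrow>\<^sub>E (UNIV :: 'a set). is_meet (p ` {..<m}) z \<and> (\<Sum>i<m. \<rho> (p i)) = n}))"

end

theory Submission
  imports Defs
begin

text \<open>Group the \<open>m\<close>-tuples by their meet \<open>z\<close>. The filter \<open>V\<^sub>z\<close> is isomorphic to
  \<open>P\<close>, and an isomorphism \<open>V\<^sub>z \<cong> P\<close> lowers ranks by exactly \<open>\<rho>(z)\<close> (it preserves
  cover relations along a saturated chain from \<open>z\<close>). Hence the tuples with meet \<open>z\<close> and
  rank sum \<open>n\<close> correspond to the tuples with meet \<open>0\<close> and rank sum \<open>n - m \<rho>(z)\<close>.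
  Summing over \<open>z\<close> gives \<open>F(x)\<^sup>m = F(x\<^sup>m) M(x)\<close>, where \<open>M\<close> is the generating function
  of the tuples with meet \<open>0\<close>; and \<open>F(x\<^sup>m)\<close> is invertible since \<open>0\<close> is the only
  element of rank \<open>0\<close>.\<close>

unbundle fps_syntax

lemma chain_in_extends_to_maximal_chain:
  assumes "chain_in (S::'a::order set)"
  shows "\<exists>C. maximal_chain C \<and> S \<subseteq> C"
proof -
  let ?A = "{D. chain_in D \<and> S \<subseteq> D}"
  have "\<Union>\<C> \<in> ?A" if "\<C> \<noteq> {}" and ch: "subset.chain ?A \<C>" for \<C>
  proof -
    have "x \<le> y \<or> y \<le> x" if "x \<in> D" "y \<in> E" "D \<in> \<C>" "E \<in> \<C>" for x y D E
    proof -
      have "D \<subseteq> E \<or> E \<subseteq> D" "chain_in D" "chain_in E"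
        using ch that unfolding subset.chain_def by blast+
      then show ?thesis using that unfolding chain_in_def by blast
    qed
    then have "chain_in (\<Union>\<C>)" unfolding chain_in_def by blast
    moreover obtain D where "D \<in> \<C>" using \<open>\<C> \<noteq> {}\<close> by blast
    then have "S \<subseteq> \<Union>\<C>" using ch unfolding subset.chain_def by auto
    ultimately show ?thesis by simp
  qed
  moreover have "S \<in> ?A" using assms by simp
  ultimately obtain M where "M \<in> ?A" "\<forall>X\<in>?A. M \<subseteq> X \<longrightarrow> X = M"
    using subset_Zorn_nonempty[of ?A] by blast
  then show ?thesis unfolding maximal_chain_def by blast
qed

lemma bij_betw_PiE_compose:
  assumes "bij_betw f A B"
  shows "bij_betw (\<lambda>p. restrict (f \<circ> p) I) (I \<rightarrow>\<^sub>E A) (I \<rightarrow>\<^sub>E B)"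
proof (rule bij_betwI[where g = "\<lambda>q. restrict (inv_into A f \<circ> q) I"])
  show "(\<lambda>p. restrict (f \<circ> p) I) \<in> (I \<rightarrow>\<^sub>E A) \<rightarrow> (I \<rightarrow>\<^sub>E B)"
    using assms by (auto simp: bij_betw_def)
  show "(\<lambda>q. restrict (inv_into A f \<circ> q) I) \<in> (I \<rightarrow>\<^sub>E B) \<rightarrow> (I \<rightarrow>\<^sub>E A)"
    using assms by (auto simp: bij_betw_def PiE_iff inv_into_into)
qed (use assms in \<open>auto simp: bij_betw_def PiE_iff extensional_def fun_eq_iff f_inv_into_f\<close>)

lemma order_iso_on_less_iff:
  "order_iso_on f A B \<Longrightarrow> x \<in> A \<Longrightarrow> y \<in> A \<Longrightarrow> f x < f y \<longleftrightarrow> x < y"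
  unfolding order_iso_on_def bij_betw_def inj_on_def by (auto simp: order_less_le)

lemma order_iso_on_filter_obtain_preimage:
  assumes "order_iso_on f {q. z \<le> q} (UNIV :: 'a::order set)"
  obtains r where "z \<le> r" "s = f r"
  using assms unfolding order_iso_on_def bij_betw_def by blast

lemma order_iso_on_filter_minimum:
  assumes f: "order_iso_on f {q. z \<le> q} (UNIV :: 'a::order set)"
  shows "f z \<le> p"
proof -
  obtain r where "z \<le> r" "p = f r" using order_iso_on_filter_obtain_preimage[OF f] .
  then show ?thesis using f unfolding order_iso_on_def by blast
qed

lemma order_iso_on_filter_covers:
  assumes f: "order_iso_on f {q. z \<le> q} (UNIV :: 'a::order set)"
    and "z \<le> x" and xy: "covers x y"
  shows "covers (f x) (f y)"
proof -
  have "z \<le> y" using assms unfolding covers_def by auto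
  have "f x < f y" using xy order_iso_on_less_iff[OF f] \<open>z \<le> x\<close> \<open>z \<le> y\<close> by (simp add: covers_def)
  moreover have "\<not> (f x < s \<and> s < f y)" for s
  proof -
    obtain r where "z \<le> r" "s = f r" using order_iso_on_filter_obtain_preimage[OF f] .
    then show ?thesis
      using xy order_iso_on_less_iff[OF f] \<open>z \<le> x\<close> \<open>z \<le> y\<close> by (auto simp: covers_def)
  qed
  ultimately show ?thesis by (simp add: covers_def)
qed

context
  fixes \<rho> :: "'a::order \<Rightarrow> nat"
  assumes graded: "graded_by \<rho>"
begin

lemma maximal_chain_rank_inj: "maximal_chain C \<Longrightarrow> inj_on \<rho> C"
  using graded unfolding graded_by_def by blast

lemma maximal_chain_rank_down:
  "maximal_chain C \<Longrightarrow> x \<in> C \<Longrightarrow> i \<le> \<rho> x \<Longrightarrow> \<exists>y\<in>C. \<rho> y = i"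
  using graded unfolding graded_by_def by blast

lemma maximal_chain_covers:
  "maximal_chain C \<Longrightarrow> x \<in> C \<Longrightarrow> y \<in> C \<Longrightarrow> \<rho> y = Suc (\<rho> x) \<Longrightarrow> covers x y"
  using graded unfolding graded_by_def by blast

lemma maximal_chain_less_if_rank_less:
  assumes C: "maximal_chain C" and "x \<in> C" "y \<in> C" "\<rho> x < \<rho> y"
  shows "x < y"
proof -
  have "x < y" if "y \<in> C" "\<rho> y = \<rho> x + Suc d" for d y
    using that
  proof (induction d arbitrary: y)
    case 0
    then show ?case using maximal_chain_covers[OF C \<open>x \<in> C\<close>] by (simp add: covers_def)
  next
    case (Suc d)
    obtain y' where y': "y' \<in> C" "\<rho> y' = \<rho> x + Suc d"
      using maximal_chain_rank_down[OF C Suc.prems(1), of "\<rho> x + Suc d"] Suc.prems(2) by auto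
    then have "covers y' y" using maximal_chain_covers[OF C] Suc.prems by simp
    with Suc.IH[OF y'] show ?case by (auto simp: covers_def)
  qed
  from this[of y "\<rho> y - \<rho> x - 1"] assms show ?thesis by simp
qed

lemma maximal_chain_through:
  assumes "p \<le> q"
  obtains C where "maximal_chain C" "p \<in> C" "q \<in> C"
  using chain_in_extends_to_maximal_chain[of "{p, q}"] assms
  unfolding chain_in_def by auto

lemma rank_strict_mono:
  assumes "p < q"
  shows "\<rho> p < \<rho> q"
proof -
  obtain C where C: "maximal_chain C" "p \<in> C" "q \<in> C"
    using maximal_chain_through assms by (metis less_imp_le)
  then have "\<rho> p \<noteq> \<rho> q" using maximal_chain_rank_inj assms by (metis inj_onD less_irrefl)
  moreover have "\<not> \<rho> q < \<rho> p" using maximal_chain_less_if_rank_less[OF C(1,3,2)] assms by auto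
  ultimately show ?thesis by simp
qed

lemma rank_mono: "p \<le> q \<Longrightarrow> \<rho> p \<le> \<rho> q"
  using rank_strict_mono[of p q] by (cases "p = q") (auto simp: order_less_le)

lemma rank_covers:
  assumes cov: "covers p q"
  shows "\<rho> q = Suc (\<rho> p)"
proof (rule ccontr)
  assume "\<rho> q \<noteq> Suc (\<rho> p)"
  moreover have "p < q" using cov by (simp add: covers_def)
  ultimately have gap: "Suc (\<rho> p) < \<rho> q" using rank_strict_mono by fastforce
  obtain C where C: "maximal_chain C" "p \<in> C" "q \<in> C"
    using maximal_chain_through \<open>p < q\<close> by (metis less_imp_le)
  then obtain r where "r \<in> C" "\<rho> r = Suc (\<rho> p)"
    using maximal_chain_rank_down gap by (meson less_imp_le)
  then have "p < r" "r < q" using maximal_chain_less_if_rank_less C gap by auto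
  with cov show False by (auto simp: covers_def)
qed

lemma covered_element_above:
  assumes "z < (q::'a)"
  obtains q' where "z \<le> q'" "covers q' q"
proof -
  obtain C where C: "maximal_chain C" "z \<in> C" "q \<in> C"
    using maximal_chain_through assms by (metis less_imp_le)
  have lt: "\<rho> z < \<rho> q" using rank_strict_mono assms .
  then obtain q' where q': "q' \<in> C" "\<rho> q' = \<rho> q - 1"
    using maximal_chain_rank_down[OF C(1,3), of "\<rho> q - 1"] by auto
  have "z \<le> q'"
  proof (cases "\<rho> z = \<rho> q'")
    case True
    then show ?thesis using inj_onD[OF maximal_chain_rank_inj[OF C(1)] _ C(2) q'(1)] by simp
  next
    case False
    then have "\<rho> z < \<rho> q'" using q' lt by simp
    then show ?thesis using maximal_chain_less_if_rank_less[OF C(1,2) q'(1)] less_imp_le by blast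
  qed
  moreover have "covers q' q" using maximal_chain_covers[OF C(1) q'(1) C(3)] q' lt by simp
  ultimately show thesis by (rule that)
qed

lemma rank_minimum:
  assumes min: "\<forall>p. a \<le> p"
  shows "\<rho> q = 0 \<longleftrightarrow> q = a"
proof -
  obtain C where C: "maximal_chain C" "a \<in> C"
    using maximal_chain_through[of a a] by blast
  then obtain c where "c \<in> C" "\<rho> c = 0" using maximal_chain_rank_down by blast
  then have "\<rho> a = 0" using rank_mono min by (metis le_zero_eq)
  then show ?thesis using rank_strict_mono min by (metis order_less_le)
qed

lemma rank_order_iso_filter:
  assumes f: "order_iso_on f {q. z \<le> q} (UNIV :: 'a set)" and "z \<le> q"
  shows "\<rho> (f q) + \<rho> z = \<rho> q"
  using \<open>z \<le> q\<close>
proof (induction "\<rho> q" arbitrary: q rule: less_induct)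
  case less
  show ?case
  proof (cases "q = z")
    case True
    then show ?thesis using rank_minimum order_iso_on_filter_minimum[OF f] by auto
  next
    case False
    then obtain q' where q': "z \<le> q'" "covers q' q"
      using covered_element_above less.prems by (metis order_less_le)
    then have "\<rho> q = Suc (\<rho> q')" by (simp add: rank_covers)
    then have "\<rho> (f q') + \<rho> z = \<rho> q'" using less.hyps q'(1) by simp
    moreover have "\<rho> (f q) = Suc (\<rho> (f q'))"
      using order_iso_on_filter_covers[OF f q'] by (simp add: rank_covers)
    ultimately show ?thesis using \<open>\<rho> q = Suc (\<rho> q')\<close> by simp
  qed
qed

end

lemma is_meet_unique: "is_meet S (a::'a::order) \<Longrightarrow> is_meet S b \<Longrightarrow> a = b"
  unfolding is_meet_def by (meson order_antisym)

lemma meet_semilattice_finite_meet: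
  assumes "meet_semilattice TYPE('a::order)" and "finite S" and "S \<noteq> {}"
  shows "\<exists>z. is_meet (S::'a set) z"
  using assms(2,3)
proof (induction S rule: finite_ne_induct)
  case (singleton x)
  then show ?case by (auto simp: is_meet_def)
next
  case (insert x F)
  then obtain z where "is_meet F z" by blast
  moreover obtain w where "is_meet {x, z} w"
    using assms(1) unfolding meet_semilattice_def by blast
  ultimately have "is_meet (insert x F) w" unfolding is_meet_def by (auto intro: order_trans)
  then show ?case by blast
qed

lemma order_iso_on_filter_is_meet:
  assumes f: "order_iso_on f {q. z \<le> q} (UNIV :: 'a::order set)"
    and S: "S \<subseteq> {q. z \<le> q}" and "z \<le> w" and "is_meet S w"
  shows "is_meet (f ` S) (f w)"
  unfolding is_meet_def
proof (intro conjI allI impI ballI)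
  show "f w \<le> s" if "s \<in> f ` S" for s
    using that f S assms(3,4) unfolding order_iso_on_def is_meet_def by blast
  show "d \<le> f w" if d: "\<forall>s\<in>f ` S. d \<le> s" for d
  proof -
    obtain d' where d': "z \<le> d'" "d = f d'" using order_iso_on_filter_obtain_preimage[OF f] .
    then have "\<forall>s\<in>S. d' \<le> s" using d f S unfolding order_iso_on_def by blast
    then show ?thesis using d' assms(3,4) f unfolding order_iso_on_def is_meet_def by blast
  qed
qed

lemma order_iso_on_filter_is_meet_iff:
  assumes ms: "meet_semilattice TYPE('a::order)"
    and f: "order_iso_on f {q. z \<le> q} (UNIV :: 'b::order set)"
    and S: "S \<subseteq> {q. z \<le> q}" "finite S" "S \<noteq> {}" and "z \<le> (w::'a)"
  shows "is_meet (f ` S) (f w) \<longleftrightarrow> is_meet S w"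
proof
  assume fw: "is_meet (f ` S) (f w)"
  obtain w' where w': "is_meet S w'" using meet_semilattice_finite_meet[OF ms S(2,3)] by blast
  then have "z \<le> w'" using S(1) unfolding is_meet_def by blast
  then have "f w' = f w" using is_meet_unique order_iso_on_filter_is_meet[OF f S(1) _ w'] fw by blast
  then have "w' = w"
    using f \<open>z \<le> w'\<close> \<open>z \<le> w\<close> unfolding order_iso_on_def bij_betw_def inj_on_def by blast
  then show "is_meet S w" using w' by simp
qed (rule order_iso_on_filter_is_meet[OF f S(1) \<open>z \<le> w\<close>])

definition weighted_tuples :: "('a \<Rightarrow> nat) \<Rightarrow> nat \<Rightarrow> nat \<Rightarrow> (nat \<Rightarrow> 'a) set" where
  "weighted_tuples \<rho> k n = {p \<in> {..<k} \<rightarrow>\<^sub>E UNIV. (\<Sum>i<k. \<rho> (p i)) = n}"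

definition meet_tuples :: "('a::order \<Rightarrow> nat) \<Rightarrow> nat \<Rightarrow> 'a \<Rightarrow> nat \<Rightarrow> (nat \<Rightarrow> 'a) set" where
  "meet_tuples \<rho> k z n = {p \<in> weighted_tuples \<rho> k n. is_meet (p ` {..<k}) z}"

lemma meet_tuple_gf_nth: "meet_tuple_gf \<rho> z m $ n = of_nat (card (meet_tuples \<rho> m z n))"
  unfolding meet_tuple_gf_def meet_tuples_def weighted_tuples_def
  by (auto intro!: arg_cong[where f = card])

lemma rank_gf_nth: "rank_gf \<rho> $ n = of_nat (card {p. \<rho> p = n})"
  by (simp add: rank_gf_def)

lemma finite_type_rank_le:
  assumes "finite_type \<rho>"
  shows "finite {p. \<rho> p \<le> n}"
proof -
  have "{p. \<rho> p \<le> n} = (\<Union>i\<le>n. {p. \<rho> p = i})" by auto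
  then show ?thesis using assms unfolding finite_type_def by simp
qed

lemma finite_weighted_tuples:
  assumes "finite_type \<rho>"
  shows "finite (weighted_tuples \<rho> k n)"
proof (rule finite_subset)
  show "weighted_tuples \<rho> k n \<subseteq> {..<k} \<rightarrow>\<^sub>E {p. \<rho> p \<le> n}"
  proof
    fix p assume p: "p \<in> weighted_tuples \<rho> k n"
    have "\<rho> (p i) \<le> n" if "i < k" for i
      using p member_le_sum[of i "{..<k}" "\<lambda>i. \<rho> (p i)"] that
      unfolding weighted_tuples_def by simp
    then show "p \<in> {..<k} \<rightarrow>\<^sub>E {p. \<rho> p \<le> n}"
      using p unfolding weighted_tuples_def by auto
  qed
  show "finite ({..<k} \<rightarrow>\<^sub>E {p. \<rho> p \<le> n})"
    using finite_type_rank_le[OF assms] by (simp add: finite_PiE)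
qed

lemma weighted_tuples_Suc:
  "weighted_tuples \<rho> (Suc k) n
     = (\<lambda>(y, g). g(k := y)) ` (\<Union>i\<le>n. {p. \<rho> p = i} \<times> weighted_tuples \<rho> k (n - i))"
    (is "_ = ?upd ` ?pairs")
proof -
  have sum_upd: "(\<Sum>i<Suc k. \<rho> ((g(k := y)) i)) = (\<Sum>i<k. \<rho> (g i)) + \<rho> y" for g y
    by (auto intro!: sum.cong)
  show ?thesis
  proof (intro equalityI subsetI)
    fix p assume p: "p \<in> weighted_tuples \<rho> (Suc k) n"
    define g where "g = restrict p {..<k}"
    define y where "y = p k"
    have yg: "p = g(k := y)" "g \<in> {..<k} \<rightarrow>\<^sub>E UNIV"
      using p by (auto simp: weighted_tuples_def g_def y_def PiE_iff extensional_def fun_eq_iff)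
    then have "\<rho> y \<le> n" "(y, g) \<in> {q. \<rho> q = \<rho> y} \<times> weighted_tuples \<rho> k (n - \<rho> y)"
      using p sum_upd by (auto simp: weighted_tuples_def)
    then show "p \<in> ?upd ` ?pairs" using yg(1) by force
  next
    fix p assume "p \<in> ?upd ` ?pairs"
    then obtain y g where "p = g(k := y)" "\<rho> y \<le> n" "g \<in> weighted_tuples \<rho> k (n - \<rho> y)"
      by auto
    then show "p \<in> weighted_tuples \<rho> (Suc k) n"
      using sum_upd by (auto simp: weighted_tuples_def PiE_iff extensional_def)
  qed
qed

lemma card_weighted_tuples_Suc:
  assumes "finite_type \<rho>"
  shows "card (weighted_tuples \<rho> (Suc k) n)
           = (\<Sum>i\<le>n. card {p. \<rho> p = i} * card (weighted_tuples \<rho> k (n - i)))"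
proof -
  have "inj_on (\<lambda>(y, g). g(k := y)) (UNIV \<times> ({..<k} \<rightarrow>\<^sub>E (UNIV :: 'a set)))"
    using inj_combinator[of k "{..<k}" "\<lambda>_. UNIV :: 'a set"] by simp
  then have "inj_on (\<lambda>(y, g). g(k := y)) (\<Union>i\<le>n. {p. \<rho> p = i} \<times> weighted_tuples \<rho> k (n - i))"
    by (rule inj_on_subset) (auto simp: weighted_tuples_def)
  then have "card (weighted_tuples \<rho> (Suc k) n)
               = card (\<Union>i\<le>n. {p. \<rho> p = i} \<times> weighted_tuples \<rho> k (n - i))"
    by (simp add: weighted_tuples_Suc card_image)
  also have "\<dots> = (\<Sum>i\<le>n. card {p. \<rho> p = i} * card (weighted_tuples \<rho> k (n - i)))"
    using assms finite_weighted_tuples[OF assms]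
    by (subst card_UN_disjoint) (auto simp: finite_type_def card_cartesian_product)
  finally show ?thesis .
qed

lemma rank_gf_power_nth:
  assumes "finite_type \<rho>"
  shows "(rank_gf \<rho> ^ k) $ n = of_nat (card (weighted_tuples \<rho> k n))"
proof (induction k arbitrary: n)
  case 0
  have "weighted_tuples \<rho> 0 n = (if n = 0 then {\<lambda>_. undefined} else {})"
    unfolding weighted_tuples_def by auto
  then show ?case by simp
next
  case (Suc k)
  have "(rank_gf \<rho> ^ Suc k) $ n = (\<Sum>i\<le>n. rank_gf \<rho> $ i * (rank_gf \<rho> ^ k) $ (n - i))"
    by (simp add: fps_mult_nth atLeast0AtMost)
  also have "\<dots> = of_nat (card (weighted_tuples \<rho> (Suc k) n))"
    by (simp add: Suc.IH rank_gf_nth card_weighted_tuples_Suc[OF assms])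
  finally show ?case .
qed

lemma weighted_tuples_eq_UN_meet_tuples:
  fixes \<rho> :: "'a::order \<Rightarrow> nat"
  assumes graded: "graded_by \<rho>" and ms: "meet_semilattice TYPE('a)" and "m \<ge> 1"
  shows "weighted_tuples \<rho> m n = (\<Union>z\<in>{z::'a. m * \<rho> z \<le> n}. meet_tuples \<rho> m z n)"
proof (intro equalityI subsetI)
  fix p assume p: "p \<in> weighted_tuples \<rho> m n"
  have "finite (p ` {..<m})" "p ` {..<m} \<noteq> {}"
    using \<open>m \<ge> 1\<close> by (auto simp: lessThan_empty_iff)
  then obtain z where z: "is_meet (p ` {..<m}) z" using meet_semilattice_finite_meet[OF ms] by blast
  then have "(\<Sum>i<m. \<rho> z) \<le> (\<Sum>i<m. \<rho> (p i))"
    by (intro sum_mono rank_mono[OF graded]) (simp add: is_meet_def)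
  then have "m * \<rho> z \<le> n" using p by (simp add: weighted_tuples_def)
  with p z show "p \<in> (\<Union>z\<in>{z. m * \<rho> z \<le> n}. meet_tuples \<rho> m z n)"
    unfolding meet_tuples_def by blast
qed (auto simp: meet_tuples_def)

lemma order_iso_on_filter_mem_meet_tuples_iff:
  fixes \<rho> :: "'a::order \<Rightarrow> nat"
  assumes graded: "graded_by \<rho>" and ms: "meet_semilattice TYPE('a)"
    and f: "order_iso_on f {q. z \<le> q} (UNIV :: 'a set)" and "m \<ge> 1"
    and p: "p \<in> {..<m} \<rightarrow>\<^sub>E {q. z \<le> q}"
  shows "restrict (f \<circ> p) {..<m} \<in> meet_tuples \<rho> m (f z) n
           \<longleftrightarrow> p \<in> meet_tuples \<rho> m z (n + m * \<rho> z)"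
proof -
  have img: "restrict (f \<circ> p) {..<m} ` {..<m} = f ` p ` {..<m}" by auto
  have "p ` {..<m} \<subseteq> {q. z \<le> q}" "finite (p ` {..<m})" "p ` {..<m} \<noteq> {}"
    using p \<open>m \<ge> 1\<close> by (auto simp: PiE_iff lessThan_empty_iff)
  then have meet: "is_meet (f ` p ` {..<m}) (f z) \<longleftrightarrow> is_meet (p ` {..<m}) z"
    by (rule order_iso_on_filter_is_meet_iff[OF ms f]) simp
  have "(\<Sum>i<m. \<rho> (f (p i))) + m * \<rho> z = (\<Sum>i<m. \<rho> (f (p i)) + \<rho> z)"
    by (simp add: sum.distrib)
  also have "\<dots> = (\<Sum>i<m. \<rho> (p i))"
  proof (rule sum.cong[OF refl])
    fix i assume "i \<in> {..<m}"
    then have "z \<le> p i" using p by auto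
    then show "\<rho> (f (p i)) + \<rho> z = \<rho> (p i)" by (rule rank_order_iso_filter[OF graded f])
  qed
  finally have "(\<Sum>i<m. \<rho> (restrict (f \<circ> p) {..<m} i)) + m * \<rho> z = (\<Sum>i<m. \<rho> (p i))"
    by simp
  moreover have "p \<in> {..<m} \<rightarrow>\<^sub>E UNIV" using p by (simp add: PiE_iff)
  ultimately show ?thesis
    using img meet unfolding meet_tuples_def weighted_tuples_def by auto
qed

lemma bij_betw_meet_tuples:
  fixes \<rho> :: "'a::order \<Rightarrow> nat"
  assumes graded: "graded_by \<rho>" and ms: "meet_semilattice TYPE('a)"
    and f: "order_iso_on f {q. z \<le> q} (UNIV :: 'a set)" and "m \<ge> 1"
  shows "bij_betw (\<lambda>p. restrict (f \<circ> p) {..<m})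
           (meet_tuples \<rho> m z (n + m * \<rho> z)) (meet_tuples \<rho> m (f z) n)"
proof -
  have "bij_betw f {q. z \<le> q} UNIV" using f by (simp add: order_iso_on_def)
  then have "bij_betw (\<lambda>p. restrict (f \<circ> p) {..<m}) ({..<m} \<rightarrow>\<^sub>E {q. z \<le> q}) ({..<m} \<rightarrow>\<^sub>E UNIV)"
    by (rule bij_betw_PiE_compose)
  then have "bij_betw (\<lambda>p. restrict (f \<circ> p) {..<m})
      {p \<in> {..<m} \<rightarrow>\<^sub>E {q. z \<le> q}. p \<in> meet_tuples \<rho> m z (n + m * \<rho> z)}
      {q \<in> {..<m} \<rightarrow>\<^sub>E UNIV. q \<in> meet_tuples \<rho> m (f z) n}"
    by (rule bij_betw_Collect) (rule order_iso_on_filter_mem_meet_tuples_iff[OF graded ms f \<open>m \<ge> 1\<close>])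
  moreover have "{p \<in> {..<m} \<rightarrow>\<^sub>E {q. z \<le> q}. p \<in> meet_tuples \<rho> m z (n + m * \<rho> z)}
                   = meet_tuples \<rho> m z (n + m * \<rho> z)"
    unfolding meet_tuples_def weighted_tuples_def by (auto simp: PiE_iff is_meet_def)
  moreover have "{q \<in> {..<m} \<rightarrow>\<^sub>E UNIV. q \<in> meet_tuples \<rho> m (f z) n} = meet_tuples \<rho> m (f z) n"
    unfolding meet_tuples_def weighted_tuples_def by auto
  ultimately show ?thesis by (simp only:)
qed

lemma card_meet_tuples_shift:
  fixes \<rho> :: "'a::order \<Rightarrow> nat"
  assumes graded: "graded_by \<rho>" and ms: "meet_semilattice TYPE('a)"
    and up: "upho TYPE('a)" and zero: "\<forall>p. zero \<le> p" and "m \<ge> 1" and "m * \<rho> z \<le> n"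
  shows "card (meet_tuples \<rho> m z n) = card (meet_tuples \<rho> m zero (n - m * \<rho> z))"
proof -
  obtain f where f: "order_iso_on f {q. z \<le> q} (UNIV :: 'a set)"
    using up unfolding upho_def by blast
  then have "f z = zero" using order_iso_on_filter_minimum zero by (blast intro: order_antisym)
  then show ?thesis
    using bij_betw_same_card[OF bij_betw_meet_tuples[OF graded ms f \<open>m \<ge> 1\<close>, of "n - m * \<rho> z"]]
      \<open>m * \<rho> z \<le> n\<close> by simp
qed

lemma card_weighted_tuples_eq_sum_meet_tuples:
  fixes \<rho> :: "'a::order \<Rightarrow> nat"
  assumes graded: "graded_by \<rho>" and ft: "finite_type \<rho>" and ms: "meet_semilattice TYPE('a)"
    and up: "upho TYPE('a)" and zero: "\<forall>p. zero \<le> p" and m: "m \<ge> 1"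
  shows "card (weighted_tuples \<rho> m n)
           = (\<Sum>k | m * k \<le> n. card {p. \<rho> p = k} * card (meet_tuples \<rho> m zero (n - m * k)))"
proof -
  let ?S = "{z::'a. m * \<rho> z \<le> n}"
  have le: "k \<le> m * k" for k using m by simp
  have "?S \<subseteq> {z. \<rho> z \<le> n}" by (auto intro: le_trans[OF le])
  then have fin_S: "finite ?S" using finite_type_rank_le[OF ft] by (rule finite_subset)
  have fin_T: "finite {k. m * k \<le> n}"
    by (rule finite_subset[of _ "{..n}"]) (auto intro: le_trans[OF le])
  have "card (weighted_tuples \<rho> m n) = (\<Sum>z\<in>?S. card (meet_tuples \<rho> m z n))"
    unfolding weighted_tuples_eq_UN_meet_tuples[OF graded ms m]
  proof (rule card_UN_disjoint[OF fin_S])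
    show "\<forall>z\<in>?S. finite (meet_tuples \<rho> m z n)"
      using finite_weighted_tuples[OF ft] by (auto simp: meet_tuples_def)
    show "\<forall>z\<in>?S. \<forall>w\<in>?S. z \<noteq> w \<longrightarrow> meet_tuples \<rho> m z n \<inter> meet_tuples \<rho> m w n = {}"
      by (auto simp: meet_tuples_def dest: is_meet_unique)
  qed
  also have "\<dots> = (\<Sum>z\<in>?S. card (meet_tuples \<rho> m zero (n - m * \<rho> z)))"
    using card_meet_tuples_shift[OF graded ms up zero m] by simp
  also have "\<dots> = (\<Sum>k | m * k \<le> n. \<Sum>z | m * \<rho> z \<le> n \<and> \<rho> z = k. card (meet_tuples \<rho> m zero (n - m * \<rho> z)))"
    by (rule sum.group[OF fin_S fin_T, of \<rho>, symmetric, unfolded mem_Collect_eq]) auto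
  also have "\<dots> = (\<Sum>k | m * k \<le> n. card {p. \<rho> p = k} * card (meet_tuples \<rho> m zero (n - m * k)))"
  proof (rule sum.cong[OF refl])
    fix k assume "k \<in> {k. m * k \<le> n}"
    then have "(\<Sum>z | m * \<rho> z \<le> n \<and> \<rho> z = k. card (meet_tuples \<rho> m zero (n - m * \<rho> z)))
                 = (\<Sum>z | \<rho> z = k. card (meet_tuples \<rho> m zero (n - m * k)))"
      by (intro sum.cong) auto
    then show "(\<Sum>z | m * \<rho> z \<le> n \<and> \<rho> z = k. card (meet_tuples \<rho> m zero (n - m * \<rho> z)))
                 = card {p. \<rho> p = k} * card (meet_tuples \<rho> m zero (n - m * k))"
      by simp
  qed
  finally show ?thesis .
qed

lemma fps_compose_X_power_nth:
  assumes "m \<ge> 1"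
  shows "(F oo fps_X ^ m) $ i = (if m dvd i then F $ (i div m) else (0::'a::comm_ring_1))"
proof -
  have "(F oo fps_X ^ m) $ i = (\<Sum>j=0..i. if j = i div m \<and> m dvd i then F $ j else 0)"
    unfolding fps_compose_nth power_mult[symmetric] fps_X_power_nth
    by (intro sum.cong) (use assms in auto)
  then show ?thesis by simp
qed

lemma fps_compose_X_power_mult_nth:
  fixes F G :: "'a::comm_ring_1 fps"
  assumes "m \<ge> 1"
  shows "((F oo fps_X ^ m) * G) $ n = (\<Sum>k | m * k \<le> n. F $ k * G $ (n - m * k))"
proof -
  have "((F oo fps_X ^ m) * G) $ n = (\<Sum>i=0..n. if m dvd i then F $ (i div m) * G $ (n - i) else 0)"
    unfolding fps_mult_nth fps_compose_X_power_nth[OF assms] by (intro sum.cong) auto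
  also have "\<dots> = (\<Sum>i\<in>{i\<in>{0..n}. m dvd i}. F $ (i div m) * G $ (n - i))"
    by (rule sum.inter_filter[symmetric]) simp
  also have "{i\<in>{0..n}. m dvd i} = times m ` {k. m * k \<le> n}" by auto
  also have "(\<Sum>i\<in>times m ` {k. m * k \<le> n}. F $ (i div m) * G $ (n - i))
               = (\<Sum>k | m * k \<le> n. F $ k * G $ (n - m * k))"
    using assms by (subst sum.reindex) (auto simp: inj_on_def)
  finally show ?thesis .
qed

theorem corollary2:
  fixes \<rho> :: "'a::order \<Rightarrow> nat" and zero :: 'a and m :: nat
  assumes "graded_by \<rho>" and "finite_type \<rho>" and "upho TYPE('a)"
    and "\<forall>p. zero \<le> p" and "meet_semilattice TYPE('a)" and "m \<ge> 1"
  shows "meet_tuple_gf \<rho> zero m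
           = rank_gf \<rho> ^ m * inverse (rank_gf \<rho> oo (fps_X ^ m))"
proof -
  let ?F = "rank_gf \<rho>" and ?G = "rank_gf \<rho> oo fps_X ^ m" and ?M = "meet_tuple_gf \<rho> zero m"
  have "?F ^ m = ?G * ?M"
  proof (rule fps_ext)
    fix n
    show "(?F ^ m) $ n = (?G * ?M) $ n"
      by (simp add: rank_gf_power_nth[OF assms(2)] card_weighted_tuples_eq_sum_meet_tuples[OF assms(1,2,5,3,4,6)]
          fps_compose_X_power_mult_nth[OF assms(6)] rank_gf_nth meet_tuple_gf_nth)
  qed
  moreover have "{p. \<rho> p = 0} = {zero}" using rank_minimum[OF assms(1,4)] by auto
  then have "?G $ 0 \<noteq> 0" by (simp add: rank_gf_nth)
  ultimately show ?thesis by (simp add: inverse_mult_eq_1' mult.assoc)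
qed

end
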